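(* For $n,s\in\mathbb{N}$, $$\overline{H}_n(\overline{s})=\sum_{k=1}^n(-1)^{k-1}\binom{n}{k}\,{}_{s+1}F_s\left(\{\tfrac12\}^{s},1-k;\{\tfrac32\}^{s};-1\right).$$
   Context: $\mathbb{N}$ is the set of positive integers; $\overline{H}_n(\overline{s})=\sum_{k=0}^{n-1}\frac{(-1)^k}{(2k+1)^s}$ (odd alternating harmonic sum); $\{a\}^s$ denotes $a$ repeated $s$ times. ${}_{s+1}F_s(a_1,\ldots,a_{s+1};b_1,\ldots,b_s;x)=\sum_{i\geq 0}\frac{(a_1)_i\cdots(a_{s+1})_i}{(b_1)_i\cdots(b_s)_i}\frac{x^i}{i!}$, with $(a)_0=1$, $(a)_i=a(a+1)\cdots(a+i-1)$ for $i>0$ (a finite sum here since $1-k\leq 0$ is an integer). *)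

theory Defs
  imports "HOL-Analysis.Analysis"
begin

definition oddAltHarm :: "nat \<Rightarrow> nat \<Rightarrow> real" where
  "oddAltHarm n s = (\<Sum>k<n. (-1)^k / (2 * real k + 1) ^ s)"

definition hypergeom :: "real list \<Rightarrow> real list \<Rightarrow> real \<Rightarrow> real" where
  "hypergeom as bs x =
     (\<Sum>i. (\<Prod>a\<leftarrow>as. pochhammer a i) / (\<Prod>b\<leftarrow>bs. pochhammer b i) * x ^ i / fact i)"

end

theory Submission
  imports Defs
begin

text \<open>Since \<open>1 - k\<close> is a non-positive integer the hypergeometric series terminates, and since
  \<open>(1/2)_i / (3/2)_i = 1/(2i + 1)\<close> the \<open>k\<close>-th summand becomes \<open>sum_{i <= k-1} C(k-1, i) a_i\<close>
  with \<open>a_i = 1/(2i + 1)^s\<close>. The theorem is the inversion of this binomial transform: by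
  \<open>C(n, j) C(j, i) = C(n, i) C(n - i, j - i)\<close> and the vanishing of alternating row sums of
  binomial coefficients, the alternating sum over \<open>k\<close> collapses to \<open>sum_{i < n} (-1)^i a_i\<close>.\<close>

lemma sum_alternating_choose_mult_choose:
  "(\<Sum>j\<le>n. (-1)^j * of_nat (n choose j) * of_nat (j choose i) :: 'a::comm_ring_1) =
     (if n = i then (-1)^i else 0)"
proof (cases "i \<le> n")
  case False
  then show ?thesis by (auto intro!: sum.neutral simp: binomial_eq_0)
next
  case True
  have "(\<Sum>j\<le>n. (-1)^j * of_nat (n choose j) * of_nat (j choose i) :: 'a) =
        (\<Sum>j\<in>{i..n}. (-1)^j * of_nat (n choose j) * of_nat (j choose i))"
    by (rule sum.mono_neutral_right) (auto simp: binomial_eq_0)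
  also have "\<dots> = (\<Sum>j\<in>{i..n}. (-1)^j * of_nat (n choose i) * of_nat ((n - i) choose (j - i)))"
    by (intro sum.cong refl) (simp add: choose_mult mult.assoc flip: of_nat_mult)
  also have "\<dots> = (\<Sum>t\<in>{0..n - i}. (-1)^(t + i) * of_nat (n choose i) * of_nat ((n - i) choose t))"
    using True sum.shift_bounds_cl_nat_ivl[of
        "\<lambda>j. (-1)^j * of_nat (n choose i) * of_nat ((n - i) choose (j - i)) :: 'a" 0 i "n - i"]
    by simp
  also have "\<dots> = (-1)^i * of_nat (n choose i) * (\<Sum>t\<le>n - i. (-1)^t * of_nat ((n - i) choose t))"
    by (simp add: sum_distrib_left atLeast0AtMost power_add mult_ac)
  also have "\<dots> = (if n = i then (-1)^i else 0)"
    using True choose_alternating_sum[of "n - i", where 'a='a] by (cases "n = i") simp_all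
  finally show ?thesis .
qed

lemma sum_alternating_choose_Suc_mult_choose:
  "(\<Sum>j<n. (-1)^j * of_nat (n choose Suc j) * of_nat (j choose i) :: 'a::comm_ring_1) =
     (if i < n then (-1)^i else 0)"
proof (induction n)
  case 0
  then show ?case by simp
next
  case (Suc n)
  have "(\<Sum>j<Suc n. (-1)^j * of_nat (Suc n choose Suc j) * of_nat (j choose i) :: 'a) =
        (\<Sum>j<Suc n. (-1)^j * of_nat (n choose j) * of_nat (j choose i)) +
        (\<Sum>j<Suc n. (-1)^j * of_nat (n choose Suc j) * of_nat (j choose i))"
    by (simp add: sum.distrib[symmetric] algebra_simps)
  also have "(\<Sum>j<Suc n. (-1)^j * of_nat (n choose j) * of_nat (j choose i) :: 'a) =
             (if n = i then (-1)^i else 0)"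
    by (simp only: lessThan_Suc_atMost sum_alternating_choose_mult_choose)
  also have "(\<Sum>j<Suc n. (-1)^j * of_nat (n choose Suc j) * of_nat (j choose i) :: 'a) =
             (if i < n then (-1)^i else 0)"
    by (simp add: Suc.IH binomial_eq_0)
  finally show ?case by auto
qed

lemma alternating_binomial_transform:
  fixes a :: "nat \<Rightarrow> 'a::comm_ring_1"
  shows "(\<Sum>j<n. (-1)^j * of_nat (n choose Suc j) * (\<Sum>i\<le>j. of_nat (j choose i) * a i)) =
           (\<Sum>i<n. (-1)^i * a i)"
proof -
  have "(\<Sum>j<n. (-1)^j * of_nat (n choose Suc j) * (\<Sum>i\<le>j. of_nat (j choose i) * a i)) =
        (\<Sum>j<n. \<Sum>i<n. (-1)^j * of_nat (n choose Suc j) * of_nat (j choose i) * a i)"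
  proof (intro sum.cong refl)
    fix j assume "j \<in> {..<n}"
    then have "(\<Sum>i\<le>j. of_nat (j choose i) * a i) = (\<Sum>i<n. of_nat (j choose i) * a i)"
      by (intro sum.mono_neutral_left) (auto simp: binomial_eq_0)
    then show "(-1)^j * of_nat (n choose Suc j) * (\<Sum>i\<le>j. of_nat (j choose i) * a i) =
               (\<Sum>i<n. (-1)^j * of_nat (n choose Suc j) * of_nat (j choose i) * a i)"
      by (simp add: sum_distrib_left mult.assoc)
  qed
  also have "\<dots> = (\<Sum>i<n. (\<Sum>j<n. (-1)^j * of_nat (n choose Suc j) * of_nat (j choose i)) * a i)"
    by (subst sum.swap) (simp add: sum_distrib_right)
  also have "\<dots> = (\<Sum>i<n. (-1)^i * a i)"
    by (simp add: sum_alternating_choose_Suc_mult_choose)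
  finally show ?thesis .
qed

lemma pochhammer_minus_of_nat_div_fact:
  "pochhammer (- of_nat m) i / fact i = ((-1)^i * of_nat (m choose i) :: 'a::field_char_0)"
  by (simp add: binomial_gbinomial gbinomial_pochhammer)

lemma hypergeom_append_minus_of_nat:
  "hypergeom (as @ [- real m]) bs x =
     (\<Sum>i\<le>m. (\<Prod>a\<leftarrow>as. pochhammer a i) / (\<Prod>b\<leftarrow>bs. pochhammer b i) *
              real (m choose i) * (- x)^i)"
proof -
  have summand: "(\<Prod>a\<leftarrow>as @ [- real m]. pochhammer a i) / (\<Prod>b\<leftarrow>bs. pochhammer b i) * x^i / fact i =
      (\<Prod>a\<leftarrow>as. pochhammer a i) / (\<Prod>b\<leftarrow>bs. pochhammer b i) * real (m choose i) * (- x)^i" for i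
  proof -
    have "(\<Prod>a\<leftarrow>as @ [- real m]. pochhammer a i) / (\<Prod>b\<leftarrow>bs. pochhammer b i) * x^i / fact i =
        (\<Prod>a\<leftarrow>as. pochhammer a i) / (\<Prod>b\<leftarrow>bs. pochhammer b i) *
          (pochhammer (- real m) i / fact i) * x^i"
      by simp
    also have "\<dots> = (\<Prod>a\<leftarrow>as. pochhammer a i) / (\<Prod>b\<leftarrow>bs. pochhammer b i) *
        real (m choose i) * (- x)^i"
      by (simp only: pochhammer_minus_of_nat_div_fact power_minus[of x] mult_ac)
    finally show ?thesis .
  qed
  show ?thesis
    unfolding hypergeom_def summand
    by (rule suminf_finite) (auto simp: binomial_eq_0)
qed

lemma pochhammer_half_div_three_halves:
  "pochhammer (1/2 :: real) i / pochhammer (3/2) i = 1 / (2 * real i + 1)"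
proof -
  have "(1/2 + real i) * pochhammer (1/2) i = pochhammer (1/2 :: real) (Suc i)"
    by (simp add: pochhammer_rec')
  also have "\<dots> = 1/2 * pochhammer (3/2) i"
    by (simp add: pochhammer_rec)
  finally show ?thesis
    by (simp add: pochhammer_eq_0_iff field_simps)
qed

lemma hypergeom_halves_minus_of_nat:
  "hypergeom (replicate s (1/2) @ [- real m]) (replicate s (3/2)) (-1) =
     (\<Sum>i\<le>m. real (m choose i) / (2 * real i + 1) ^ s)"
proof -
  have "(pochhammer (1/2) i / pochhammer (3/2) i) ^ s = (1 / (2 * real i + 1)) ^ s" for i
    by (simp only: pochhammer_half_div_three_halves)
  then show ?thesis
    unfolding hypergeom_append_minus_of_nat prod_list_replicate
    by (simp add: power_divide)
qed

theorem corollary3p4: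
  fixes n s :: nat
  assumes "n \<ge> 1" and "s \<ge> 1"
  shows "oddAltHarm n s =
    (\<Sum>k=1..n. (-1)^(k-1) * real (n choose k) *
       hypergeom (replicate s (1/2) @ [1 - real k]) (replicate s (3/2)) (-1))"
proof -
  have "(\<Sum>k=1..n. (-1)^(k-1) * real (n choose k) *
          hypergeom (replicate s (1/2) @ [1 - real k]) (replicate s (3/2)) (-1)) =
        (\<Sum>j<n. (-1)^j * real (n choose Suc j) *
          hypergeom (replicate s (1/2) @ [- real j]) (replicate s (3/2)) (-1))"
    unfolding One_nat_def sum.atLeast1_atMost_eq by simp
  also have "\<dots> = (\<Sum>i<n. (-1)^i * (1 / (2 * real i + 1) ^ s))"
    using alternating_binomial_transform[of n "\<lambda>i. 1 / (2 * real i + 1) ^ s"]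
    by (simp add: hypergeom_halves_minus_of_nat)
  finally show ?thesis
    by (simp add: oddAltHarm_def)
qed

end
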